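(* Let $H_{2n}$ denote the Kauffman bracket evaluation of the tetrahedron graph with all six edges colored $2n$. Then the tail of the sequence $\{H_{2n}\}_{n\in\mathbb{N}}$ is $$T(H_{2n})=\frac{(q;q)_\infty^3}{1-q}\sum_{i=0}^{\infty}\frac{(-1)^i q^{(i+3i^2)/2}}{(q;q)_i^3}.$$
   Context: $(q;q)_m=\prod_{k=1}^m(1-q^k)$ ($(q;q)_0=1$), $(q;q)_\infty=\prod_{k\ge1}(1-q^k)$. With $q=A^4$, the tetrahedron evaluation satisfies the closed form $$H_{2n}=\frac{q^{-2n}(q;q)_n^{12}}{(1-q)(q;q)_{2n}^6}\sum_{i=0}^{n}\frac{(-1)^i q^{(i+3i^2)/2}(q;q)_{4n-i}}{(q;q)_{n-i}^4(q;q)_i^3}.$$ Rational functions are identified with their Laurent series expansions in $q$ (normalized to lie in $\mathbb{Z}[q^{-1}][[q]]$). For non-zero Laurent series $P_1,P_2$, $P_1\doteq_nP_2$ means their first $n$ coefficients (starting from each one's minimal degree) agree up to a common sign. The tail of a sequence $\{P_n\}$ is the series $T$ of minimal degree $0$ with $T\doteq_nP_n$ for every $n$ (determined up to sign). *)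

theory Defs
  imports "HOL-Computational_Algebra.Formal_Laurent_Series"
begin

text \<open>All series are formal Laurent series in q over the rationals (coefficients are
  in fact integers). Rational functions in q are identified with their Laurent
  expansion, realised by division in the field of formal Laurent series.\<close>

definition qpoch :: "nat \<Rightarrow> rat fls" where
  "qpoch m = (\<Prod>k\<in>{1..m}. (1 - fls_X ^ k))"

definition qpoch_inf :: "rat fls" where
  "qpoch_inf = lim (\<lambda>m. qpoch m)"

text \<open>Closed form of the tetrahedron evaluation H_{2n} (q = A^4).\<close>
definition H :: "nat \<Rightarrow> rat fls" where
  "H n = fls_X_intpow (- 2 * int n) * qpoch n ^ 12 / ((1 - fls_X) * qpoch (2 * n) ^ 6)
         * (\<Sum>i\<in>{0..n}. (-1) ^ i * fls_X ^ ((i + 3 * i\<^sup>2) div 2) * qpoch (4 * n - i)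
              / (qpoch (n - i) ^ 4 * qpoch i ^ 3))"

definition approx_eq :: "nat \<Rightarrow> rat fls \<Rightarrow> rat fls \<Rightarrow> bool" where
  "approx_eq n P1 P2 \<longleftrightarrow> P1 \<noteq> 0 \<and> P2 \<noteq> 0 \<and>
     (\<exists>\<epsilon>\<in>{1, -1}. \<forall>j<n. fls_nth P1 (fls_subdegree P1 + int j)
                          = \<epsilon> * fls_nth P2 (fls_subdegree P2 + int j))"

definition is_tail :: "rat fls \<Rightarrow> (nat \<Rightarrow> rat fls) \<Rightarrow> bool" where
  "is_tail T P \<longleftrightarrow> T \<noteq> 0 \<and> fls_subdegree T = 0 \<and> (\<forall>n. approx_eq n T (P n))"

end

theory Submission
  imports Defs
begin

unbundle fps_syntax

text \<open>Up to the factor q^(-2n), H_2n is built from q-Pochhammer symbols (q;q)_m with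
  m \<ge> n, each of which agrees with (q;q)_\<infinity> in all degrees \<le> n. The i-th summand carries
  q^((i+3i^2)/2), of degree \<ge> i, so replacing (q;q)_(4n-i) / (q;q)_(n-i)^4 by (q;q)_\<infinity>^(-3)
  changes it only in degrees > n; likewise the terms i > n of the infinite series contribute
  only in degrees > n. Hence the normalised H_2n and the tail agree up to degree n, and since
  both start in degree 0, their first n coefficients coincide.\<close>

definition fls_vanishes_below :: "int \<Rightarrow> 'a::zero fls \<Rightarrow> bool" where
  "fls_vanishes_below N f \<longleftrightarrow> (\<forall>k<N. f $$ k = 0)"

definition fls_eq_below :: "int \<Rightarrow> 'a::zero fls \<Rightarrow> 'a fls \<Rightarrow> bool" where
  "fls_eq_below N f g \<longleftrightarrow> (\<forall>k<N. f $$ k = g $$ k)"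

definition is_fps_unit :: "'a::field fls \<Rightarrow> bool" where
  "is_fps_unit f \<longleftrightarrow> f \<noteq> 0 \<and> fls_subdegree f = 0"

lemma fls_vanishes_below_iff: "fls_vanishes_below N f \<longleftrightarrow> f = 0 \<or> N \<le> fls_subdegree f"
  unfolding fls_vanishes_below_def
  by (metis fls_eq0_below_subdegree fls_subdegree_geI le_less_trans linorder_not_le
      nth_fls_subdegree_nonzero zero_fls.rep_eq)

lemma fls_vanishes_below_mono: "fls_vanishes_below N f \<Longrightarrow> M \<le> N \<Longrightarrow> fls_vanishes_below M f"
  by (simp add: fls_vanishes_below_def)

lemma fls_vanishes_below_1: "fls_vanishes_below 0 1"
  by (simp add: fls_vanishes_below_def)

lemma fls_vanishes_below_X_power: "fls_vanishes_below (int k) (fls_X ^ k)"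
  by (simp add: fls_vanishes_below_def)

lemma fls_vanishes_below_sum:
  "(\<And>i. i \<in> A \<Longrightarrow> fls_vanishes_below N (f i)) \<Longrightarrow> fls_vanishes_below N (sum f A)"
  by (simp add: fls_vanishes_below_def fls_nth_sum)

lemma fls_vanishes_below_mult:
  fixes f g :: "'a::semiring_no_zero_divisors fls"
  shows "fls_vanishes_below a f \<Longrightarrow> fls_vanishes_below b g \<Longrightarrow> fls_vanishes_below (a + b) (f * g)"
  unfolding fls_vanishes_below_iff by (cases "f = 0 \<or> g = 0") auto

lemma fls_vanishes_below_power:
  fixes f :: "'a::{semiring_1, semiring_no_zero_divisors} fls"
  shows "fls_vanishes_below 0 f \<Longrightarrow> fls_vanishes_below 0 (f ^ k)"
  by (induction k) (auto simp: fls_vanishes_below_1 dest: fls_vanishes_below_mult[of 0 f 0])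

lemma fls_eq_below_iff_vanishes_below_diff:
  "fls_eq_below N f g \<longleftrightarrow> fls_vanishes_below N (f - g)"
  by (simp add: fls_eq_below_def fls_vanishes_below_def)

lemma fls_eq_below_refl [simp]: "fls_eq_below N f f"
  by (simp add: fls_eq_below_def)

lemma fls_eq_below_sym: "fls_eq_below N f g \<Longrightarrow> fls_eq_below N g f"
  by (simp add: fls_eq_below_def)

lemma fls_eq_below_trans [trans]: "fls_eq_below N f g \<Longrightarrow> fls_eq_below N g h \<Longrightarrow> fls_eq_below N f h"
  by (simp add: fls_eq_below_def)

lemma fls_eq_below_mono: "fls_eq_below N f g \<Longrightarrow> M \<le> N \<Longrightarrow> fls_eq_below M f g"
  by (simp add: fls_eq_below_def)

lemma fls_eq_below_sum:
  "(\<And>i. i \<in> A \<Longrightarrow> fls_eq_below N (f i) (g i)) \<Longrightarrow> fls_eq_below N (sum f A) (sum g A)"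
  by (simp add: fls_eq_below_def fls_nth_sum)

lemma fls_eq_below_mult_left:
  fixes f g g' :: "'a::{ring, semiring_no_zero_divisors} fls"
  assumes "fls_vanishes_below a f" "fls_eq_below b g g'"
  shows "fls_eq_below (a + b) (f * g) (f * g')"
  using fls_vanishes_below_mult[OF assms(1), of b "g - g'"] assms(2)
  by (simp add: fls_eq_below_iff_vanishes_below_diff right_diff_distrib)

lemma fls_eq_below_mult:
  fixes f f' g g' :: "'a::idom fls"
  assumes "fls_vanishes_below 0 f" "fls_vanishes_below 0 g'"
    and "fls_eq_below N f f'" "fls_eq_below N g g'"
  shows "fls_eq_below N (f * g) (f' * g')"
proof -
  have "fls_eq_below N (f * g) (f * g')"
    using fls_eq_below_mult_left[OF assms(1,4)] by simp
  moreover have "fls_eq_below N (g' * f) (g' * f')"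
    using fls_eq_below_mult_left[OF assms(2,3)] by simp
  ultimately show ?thesis
    by (metis fls_eq_below_trans mult.commute)
qed

lemma fls_eq_below_power:
  fixes f g :: "'a::idom fls"
  assumes "fls_vanishes_below 0 f" "fls_vanishes_below 0 g" "fls_eq_below N f g"
  shows "fls_eq_below N (f ^ k) (g ^ k)"
  by (induction k) (auto intro!: fls_eq_below_mult fls_vanishes_below_power assms)

lemma is_fps_unit_iff: "is_fps_unit f \<longleftrightarrow> fls_vanishes_below 0 f \<and> f $$ 0 \<noteq> 0"
  unfolding is_fps_unit_def fls_vanishes_below_iff
  by (metis antisym fls_subdegree_leI nth_fls_subdegree_nonzero zero_fls.rep_eq)

lemma is_fps_unit_vanishes_below: "is_fps_unit f \<Longrightarrow> fls_vanishes_below 0 f"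
  by (simp add: is_fps_unit_iff)

lemma is_fps_unit_nonzero: "is_fps_unit f \<Longrightarrow> f \<noteq> 0"
  by (simp add: is_fps_unit_def)

lemma is_fps_unit_mult: "is_fps_unit f \<Longrightarrow> is_fps_unit g \<Longrightarrow> is_fps_unit (f * g)"
  by (simp add: is_fps_unit_def)

lemma is_fps_unit_power: "is_fps_unit f \<Longrightarrow> is_fps_unit (f ^ k)"
  by (induction k) (auto simp: is_fps_unit_mult, simp add: is_fps_unit_def)

lemma is_fps_unit_inverse: "is_fps_unit f \<Longrightarrow> is_fps_unit (inverse f)"
  by (simp add: is_fps_unit_def)

lemma is_fps_unit_divide: "is_fps_unit f \<Longrightarrow> is_fps_unit g \<Longrightarrow> is_fps_unit (f / g)"
  by (simp add: divide_inverse is_fps_unit_mult is_fps_unit_inverse)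

lemma is_fps_unit_one_minus_X_power: "k \<ge> 1 \<Longrightarrow> is_fps_unit (1 - fls_X ^ k)"
  by (simp add: is_fps_unit_iff fls_vanishes_below_def)

lemma is_fps_unit_eq_below:
  "is_fps_unit f \<Longrightarrow> fls_vanishes_below 0 g \<Longrightarrow> fls_eq_below 1 f g \<Longrightarrow> is_fps_unit g"
  by (simp add: is_fps_unit_iff fls_eq_below_def)

lemma fls_vanishes_below_divide:
  "fls_vanishes_below N f \<Longrightarrow> is_fps_unit g \<Longrightarrow> fls_vanishes_below N (f / g)"
  using fls_vanishes_below_mult[of N f 0 "inverse g"]
  by (simp add: divide_inverse is_fps_unit_inverse is_fps_unit_vanishes_below)

lemma fls_eq_below_inverse:
  assumes "is_fps_unit g" "is_fps_unit g'" "fls_eq_below N g g'"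
  shows "fls_eq_below N (inverse g) (inverse g')"
proof -
  have "inverse g - inverse g' = (g' - g) / (g * g')"
    using assms(1,2) by (simp add: is_fps_unit_def field_simps)
  moreover have "fls_vanishes_below N ((g' - g) / (g * g'))"
    using assms by (intro fls_vanishes_below_divide is_fps_unit_mult)
      (simp_all add: fls_eq_below_sym flip: fls_eq_below_iff_vanishes_below_diff)
  ultimately show ?thesis
    by (simp add: fls_eq_below_iff_vanishes_below_diff)
qed

lemma fls_eq_below_divide:
  assumes "fls_vanishes_below 0 f" "is_fps_unit g" "is_fps_unit g'"
    and "fls_eq_below N f f'" "fls_eq_below N g g'"
  shows "fls_eq_below N (f / g) (f' / g')"
  unfolding divide_inverse using assms
  by (intro fls_eq_below_mult fls_eq_below_inverse) (auto intro: is_fps_unit_vanishes_below is_fps_unit_inverse)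

lemma dist_fls_le_if_eq_below:
  fixes f g :: "'a::group_add fls"
  assumes "fls_eq_below (int n) f g"
  shows "dist f g \<le> inverse (2 ^ n)"
proof (cases "f = g")
  case False
  then have "int n \<le> fls_subdegree (f - g)"
    using assms by (simp add: fls_eq_below_iff_vanishes_below_diff fls_vanishes_below_iff)
  then have "(2::real) ^ n \<le> 2 ^ nat (fls_subdegree (f - g))"
    by (intro power_increasing) simp_all
  with False \<open>int n \<le> fls_subdegree (f - g)\<close> show ?thesis
    by (simp add: dist_fls_def)
qed simp

lemma LIMSEQ_if_fls_eq_below:
  fixes s :: "nat \<Rightarrow> 'a::group_add fls"
  assumes "\<And>m. fls_eq_below (int m) (s m) L"
  shows "s \<longlonglongrightarrow> L"
proof (rule metric_LIMSEQ_I)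
  fix r :: real
  assume "0 < r"
  then obtain m0 where "\<forall>m\<ge>m0. inverse ((2::real) ^ m) < r"
    using LIMSEQ_D[OF LIMSEQ_inverse_realpow_zero[of 2]] by fastforce
  then show "\<exists>m0. \<forall>m\<ge>m0. dist (s m) L < r"
    using dist_fls_le_if_eq_below[OF assms] by (meson order.strict_trans1)
qed

text \<open>The library equips \<open>'a fls\<close> with a metric but not with a
  \<open>complete_space\<close> instance, so the limit is built coefficientwise.\<close>

lemma fls_stabilizing_sequence_limit:
  fixes s :: "nat \<Rightarrow> 'a::group_add fls"
  assumes stable: "\<And>m m'. m \<le> m' \<Longrightarrow> fls_eq_below (int m) (s m) (s m')"
    and power_series: "\<And>m. fls_vanishes_below 0 (s m)"
  obtains L where "s \<longlonglongrightarrow> L" "\<And>m. fls_eq_below (int m) (s m) L" "fls_vanishes_below 0 L"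
proof
  define L where "L = fps_to_fls (Abs_fps (\<lambda>k. s (Suc k) $$ int k))"
  show eq: "fls_eq_below (int m) (s m) L" for m
    unfolding fls_eq_below_def
  proof (intro allI impI)
    fix k
    assume "k < int m"
    show "s m $$ k = L $$ k"
    proof (cases "k < 0")
      case True
      then show ?thesis
        using power_series[of m] by (simp add: L_def fls_vanishes_below_def)
    next
      case False
      with \<open>k < int m\<close> have "s m $$ k = s (Suc (nat k)) $$ k"
        using stable[of "Suc (nat k)" m] by (simp add: fls_eq_below_def)
      with False show ?thesis
        by (simp add: L_def)
    qed
  qed
  show "s \<longlonglongrightarrow> L"
    using LIMSEQ_if_fls_eq_below[OF eq] .
  show "fls_vanishes_below 0 L"
    by (simp add: L_def fls_vanishes_below_def)
qed

lemma fls_suminf_eq_below_partial_sum: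
  fixes t :: "nat \<Rightarrow> 'a::ab_group_add fls"
  assumes "\<And>i. fls_vanishes_below (int i) (t i)"
  shows "fls_eq_below (int n + 1) (\<Sum>i\<le>n. t i) (\<Sum>i. t i)"
    and "fls_vanishes_below 0 (\<Sum>i. t i)"
proof -
  define s where "s m = (\<Sum>i<m. t i)" for m
  have "fls_eq_below (int m) (s m) (s m')" if "m \<le> m'" for m m'
    using that
  proof (induction m' rule: dec_induct)
    case (step k)
    have "fls_vanishes_below (int m) (t k)"
      using assms[of k] step.hyps by (auto intro: fls_vanishes_below_mono)
    with step.IH show ?case
      by (simp add: s_def fls_eq_below_def fls_vanishes_below_def)
  qed simp
  moreover have "fls_vanishes_below 0 (s m)" for m
    unfolding s_def using assms by (intro fls_vanishes_below_sum fls_vanishes_below_mono[OF assms]) simp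
  ultimately obtain S where S: "s \<longlonglongrightarrow> S" "\<And>m. fls_eq_below (int m) (s m) S"
    "fls_vanishes_below 0 S"
    using fls_stabilizing_sequence_limit[of s] by blast
  have "(\<Sum>i. t i) = S"
    using S(1) unfolding s_def by (simp add: sums_def sums_unique[symmetric])
  then show "fls_eq_below (int n + 1) (\<Sum>i\<le>n. t i) (\<Sum>i. t i)"
            "fls_vanishes_below 0 (\<Sum>i. t i)"
    using S(2)[of "Suc n"] S(3) by (simp_all add: s_def lessThan_Suc_atMost add.commute)
qed

lemma approx_eq_shift_if_eq_below:
  assumes "is_fps_unit T" "fls_eq_below (int n + 1) T G"
  shows "approx_eq n T (fls_shift k G)"
proof -
  have "is_fps_unit G"
  proof (rule is_fps_unit_eq_below[OF assms(1)])
    show "fls_vanishes_below 0 G"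
      using assms is_fps_unit_vanishes_below[OF assms(1)]
      by (auto simp: fls_vanishes_below_def fls_eq_below_def)
    show "fls_eq_below 1 T G"
      using assms(2) by (rule fls_eq_below_mono) simp
  qed
  with assms show ?thesis
    unfolding approx_eq_def is_fps_unit_def fls_eq_below_def
    by (intro conjI bexI[of _ 1]) (auto simp: fls_shift_eq0_iff add.commute)
qed

lemma qpoch_Suc: "qpoch (Suc m) = qpoch m * (1 - fls_X ^ Suc m)"
  by (simp add: qpoch_def)

lemma is_fps_unit_qpoch: "is_fps_unit (qpoch m)"
proof (induction m)
  case 0
  then show ?case
    by (simp add: qpoch_def is_fps_unit_def)
next
  case (Suc m)
  then show ?case
    unfolding qpoch_Suc by (intro is_fps_unit_mult is_fps_unit_one_minus_X_power) simp_all
qed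

lemma qpoch_eq_below: "m \<le> m' \<Longrightarrow> fls_eq_below (int m + 1) (qpoch m) (qpoch m')"
proof (induction m' rule: dec_induct)
  case (step k)
  have "fls_vanishes_below (int (Suc k) + 0) (fls_X ^ Suc k * qpoch k)"
    by (rule fls_vanishes_below_mult[OF fls_vanishes_below_X_power
          is_fps_unit_vanishes_below[OF is_fps_unit_qpoch]])
  then have "fls_vanishes_below (int m + 1) (fls_X ^ Suc k * qpoch k)"
    by (rule fls_vanishes_below_mono) (use step.hyps in simp)
  with step.IH show ?case
    by (simp add: qpoch_Suc fls_eq_below_def fls_vanishes_below_def algebra_simps)
qed simp

lemma
  shows is_fps_unit_qpoch_inf: "is_fps_unit qpoch_inf"
    and qpoch_eq_below_qpoch_inf: "fls_eq_below (int m + 1) (qpoch m) qpoch_inf"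
proof -
  have "fls_eq_below (int m) (qpoch m) (qpoch m')" if "m \<le> m'" for m m'
    using qpoch_eq_below[OF that] by (rule fls_eq_below_mono) simp
  then obtain L where L: "qpoch \<longlonglongrightarrow> L" "\<And>m. fls_eq_below (int m) (qpoch m) L"
    "fls_vanishes_below 0 L"
    using fls_stabilizing_sequence_limit[of qpoch] is_fps_unit_vanishes_below[OF is_fps_unit_qpoch]
    by blast
  have "qpoch_inf = L"
    unfolding qpoch_inf_def using L(1) by (rule limI)
  moreover have eq: "fls_eq_below (int m + 1) (qpoch m) L" for m
    using qpoch_eq_below[of m "Suc m"] L(2)[of "Suc m"]
    by (auto intro: fls_eq_below_trans simp: add.commute)
  moreover have "is_fps_unit L"
    using is_fps_unit_eq_below[OF is_fps_unit_qpoch L(3)] eq[of 0] by simp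
  ultimately show "is_fps_unit qpoch_inf" "fls_eq_below (int m + 1) (qpoch m) qpoch_inf"
    by simp_all
qed

definition tail_term :: "nat \<Rightarrow> rat fls" where
  "tail_term i = (-1) ^ i * fls_X ^ ((i + 3 * i\<^sup>2) div 2) / qpoch i ^ 3"

lemma tail_term_vanishes_below: "fls_vanishes_below (int i) (tail_term i)"
proof -
  have "2 * i \<le> i + 3 * i\<^sup>2"
    by (simp add: power2_eq_square)
  then have "int i \<le> int ((i + 3 * i\<^sup>2) div 2)"
    using div_le_mono[of "2 * i" _ 2] by simp
  then have X: "fls_vanishes_below (int i) (fls_X ^ ((i + 3 * i\<^sup>2) div 2) :: rat fls)"
    by (rule fls_vanishes_below_mono[OF fls_vanishes_below_X_power])
  have sign: "fls_vanishes_below 0 ((-1) ^ i :: rat fls)"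
    by (intro fls_vanishes_below_power) (simp add: fls_vanishes_below_def)
  show ?thesis
    using fls_vanishes_below_mult[OF sign X] unfolding tail_term_def
    by (intro fls_vanishes_below_divide is_fps_unit_power is_fps_unit_qpoch) simp_all
qed

lemma is_fps_unit_tail_sum: "is_fps_unit (\<Sum>i. tail_term i)"
proof (rule is_fps_unit_eq_below)
  show "is_fps_unit (1 :: rat fls)"
    by (simp add: is_fps_unit_def)
  show "fls_vanishes_below 0 (\<Sum>i. tail_term i)"
    by (rule fls_suminf_eq_below_partial_sum(2)[OF tail_term_vanishes_below])
  have "tail_term 0 = 1"
    unfolding tail_term_def by (simp add: qpoch_def)
  then show "fls_eq_below 1 1 (\<Sum>i. tail_term i)"
    using fls_suminf_eq_below_partial_sum(1)[OF tail_term_vanishes_below, of 0] by simp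
qed

lemma is_fps_unit_one_minus_X: "is_fps_unit (1 - fls_X)"
  using is_fps_unit_one_minus_X_power[of 1] by simp

lemma H_prefactor_eq_below:
  "fls_eq_below (int n + 1) (qpoch n ^ 12 / ((1 - fls_X) * qpoch (2 * n) ^ 6))
     (qpoch_inf ^ 6 / (1 - fls_X))"
proof -
  let ?Q = qpoch_inf
  have Q: "fls_eq_below (int n + 1) (qpoch m) ?Q" if "n \<le> m" for m
    using qpoch_eq_below_qpoch_inf[of m] by (rule fls_eq_below_mono) (use that in simp)
  have vQ: "fls_vanishes_below 0 ?Q" and vq: "fls_vanishes_below 0 (qpoch m)" for m
    by (simp_all add: is_fps_unit_vanishes_below is_fps_unit_qpoch is_fps_unit_qpoch_inf)
  have "fls_eq_below (int n + 1) (qpoch n ^ 12 / ((1 - fls_X) * qpoch (2 * n) ^ 6))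
          (?Q ^ 12 / ((1 - fls_X) * ?Q ^ 6))"
  proof (rule fls_eq_below_divide)
    show "fls_eq_below (int n + 1) (qpoch n ^ 12) (?Q ^ 12)"
      by (intro fls_eq_below_power vq vQ Q) simp
    show "fls_eq_below (int n + 1) ((1 - fls_X) * qpoch (2 * n) ^ 6) ((1 - fls_X) * ?Q ^ 6)"
      using fls_eq_below_mult_left[OF is_fps_unit_vanishes_below[OF is_fps_unit_one_minus_X]
          fls_eq_below_power[OF vq vQ Q[of "2 * n"]]] by simp
  qed (intro fls_vanishes_below_power vq is_fps_unit_mult is_fps_unit_one_minus_X
      is_fps_unit_power is_fps_unit_qpoch is_fps_unit_qpoch_inf)+
  moreover have "?Q ^ 12 / ((1 - fls_X) * ?Q ^ 6) = ?Q ^ 6 / (1 - fls_X)"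
  proof -
    have "q ^ 12 / (d * q ^ 6) = q ^ 6 / d" if "q \<noteq> 0" for q d :: "rat fls"
      using that by (cases "d = 0") (simp_all add: field_simps flip: power_add)
    then show ?thesis
      using is_fps_unit_nonzero[OF is_fps_unit_qpoch_inf] .
  qed
  ultimately show ?thesis
    by simp
qed

lemma H_summand_eq_below:
  assumes "i \<le> n"
  shows "fls_eq_below (int n + 1)
    ((-1) ^ i * fls_X ^ ((i + 3 * i\<^sup>2) div 2) * qpoch (4 * n - i) / (qpoch (n - i) ^ 4 * qpoch i ^ 3))
    (tail_term i / qpoch_inf ^ 3)"
proof -
  let ?Q = qpoch_inf
  have "fls_eq_below (int (n - i) + 1) (qpoch (4 * n - i) / qpoch (n - i) ^ 4) (?Q / ?Q ^ 4)"
  proof (rule fls_eq_below_divide)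
    show "fls_eq_below (int (n - i) + 1) (qpoch (4 * n - i)) ?Q"
      using qpoch_eq_below_qpoch_inf[of "4 * n - i"] by (rule fls_eq_below_mono) simp
    show "fls_eq_below (int (n - i) + 1) (qpoch (n - i) ^ 4) (?Q ^ 4)"
      by (intro fls_eq_below_power qpoch_eq_below_qpoch_inf is_fps_unit_vanishes_below
          is_fps_unit_qpoch is_fps_unit_qpoch_inf)
  qed (intro is_fps_unit_vanishes_below is_fps_unit_power is_fps_unit_qpoch is_fps_unit_qpoch_inf)+
  then have "fls_eq_below (int i + (int (n - i) + 1))
      (tail_term i * (qpoch (4 * n - i) / qpoch (n - i) ^ 4)) (tail_term i * (?Q / ?Q ^ 4))"
    by (rule fls_eq_below_mult_left[OF tail_term_vanishes_below])
  moreover have "tail_term i * (qpoch (4 * n - i) / qpoch (n - i) ^ 4)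
      = (-1) ^ i * fls_X ^ ((i + 3 * i\<^sup>2) div 2) * qpoch (4 * n - i) / (qpoch (n - i) ^ 4 * qpoch i ^ 3)"
    using is_fps_unit_nonzero[OF is_fps_unit_qpoch] by (simp add: tail_term_def field_simps)
  moreover have "tail_term i * (?Q / ?Q ^ 4) = tail_term i / ?Q ^ 3"
    using is_fps_unit_nonzero[OF is_fps_unit_qpoch_inf] by (simp add: field_simps eval_nat_numeral)
  ultimately show ?thesis
    using assms by simp
qed

definition H_normalized :: "nat \<Rightarrow> rat fls" where
  "H_normalized n = qpoch n ^ 12 / ((1 - fls_X) * qpoch (2 * n) ^ 6)
     * (\<Sum>i\<in>{0..n}. (-1) ^ i * fls_X ^ ((i + 3 * i\<^sup>2) div 2) * qpoch (4 * n - i)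
          / (qpoch (n - i) ^ 4 * qpoch i ^ 3))"

lemma H_eq_shift_H_normalized: "H n = fls_shift (2 * int n) (H_normalized n)"
proof -
  have "H n = fls_X_intpow (- 2 * int n) * H_normalized n"
    unfolding H_def H_normalized_def by (simp only: mult.assoc times_divide_eq_right[symmetric])
  then show ?thesis
    by (simp only: fls_X_intpow_times_conv_shift(1)) simp
qed

lemma H_normalized_eq_below_tail:
  "fls_eq_below (int n + 1) (H_normalized n) (qpoch_inf ^ 3 / (1 - fls_X) * (\<Sum>i. tail_term i))"
proof -
  let ?Q = qpoch_inf and ?S = "\<Sum>i. tail_term i"
  have uQ3: "is_fps_unit (?Q ^ 3)"
    by (intro is_fps_unit_power is_fps_unit_qpoch_inf)
  have "fls_eq_below (int n + 1)
      (\<Sum>i\<in>{0..n}. (-1) ^ i * fls_X ^ ((i + 3 * i\<^sup>2) div 2) * qpoch (4 * n - i)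
            / (qpoch (n - i) ^ 4 * qpoch i ^ 3))
      ((\<Sum>i\<le>n. tail_term i) / ?Q ^ 3)"
    unfolding sum_divide_distrib atLeast0AtMost by (intro fls_eq_below_sum H_summand_eq_below) simp
  also have "fls_eq_below (int n + 1) ((\<Sum>i\<le>n. tail_term i) / ?Q ^ 3) (?S / ?Q ^ 3)"
    by (intro fls_eq_below_divide[OF _ uQ3 uQ3] fls_vanishes_below_sum
        fls_suminf_eq_below_partial_sum(1) tail_term_vanishes_below fls_eq_below_refl
        fls_vanishes_below_mono[OF tail_term_vanishes_below]) simp
  finally have "fls_eq_below (int n + 1) (H_normalized n) (?Q ^ 6 / (1 - fls_X) * (?S / ?Q ^ 3))"
    unfolding H_normalized_def
    by (intro fls_eq_below_mult H_prefactor_eq_below fls_vanishes_below_divide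
        fls_vanishes_below_power is_fps_unit_vanishes_below is_fps_unit_mult is_fps_unit_power
        is_fps_unit_qpoch is_fps_unit_one_minus_X is_fps_unit_tail_sum uQ3)
  moreover have "?Q ^ 6 / (1 - fls_X) * (?S / ?Q ^ 3) = ?Q ^ 3 / (1 - fls_X) * ?S"
  proof -
    have "q ^ 6 / d * (s / q ^ 3) = q ^ 3 / d * s" if "q \<noteq> 0" for q d s :: "rat fls"
      using that by (cases "d = 0") (simp_all add: field_simps flip: power_add)
    then show ?thesis
      using is_fps_unit_nonzero[OF is_fps_unit_qpoch_inf] .
  qed
  ultimately show ?thesis
    by simp
qed

theorem mainTheorem7:
  shows "is_tail
     (qpoch_inf ^ 3 / (1 - fls_X) *
       (\<Sum>i. (-1) ^ i * fls_X ^ ((i + 3 * i\<^sup>2) div 2) / qpoch i ^ 3))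
     H"
proof -
  define T where "T = qpoch_inf ^ 3 / (1 - fls_X) * (\<Sum>i. tail_term i)"
  have T: "is_fps_unit T"
    unfolding T_def by (intro is_fps_unit_mult is_fps_unit_divide is_fps_unit_power
        is_fps_unit_qpoch_inf is_fps_unit_one_minus_X is_fps_unit_tail_sum)
  have "approx_eq n T (H n)" for n
    unfolding H_eq_shift_H_normalized T_def
    by (rule approx_eq_shift_if_eq_below[OF T[unfolded T_def]
          fls_eq_below_sym[OF H_normalized_eq_below_tail]])
  with T show ?thesis
    unfolding is_tail_def is_fps_unit_def T_def tail_term_def by simp
qed

end
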